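(* Consider the $1$-BHS problem in the model below, with agents having $O(\log n)$ bits of memory and nodes having whiteboards of $O(\log n)$ bits, where the agents may start from an arbitrary initial configuration (arbitrary placement on safe nodes). Then there exist instances in which $2\delta_{BH}$ agents cannot solve $1$-BHS, where $\delta_{BH}$ is the degree of the black hole in the footprint; i.e., it is impossible for $2\delta_{BH}$ agents to solve $1$-BHS in general.
   Context: A time-varying graph (TVG) is $\mathcal{G}=(V,E,\mathbb{T},\rho)$ with discrete rounds $\mathbb{T}=\mathbb{Z}^+$ and $\rho:E\times\mathbb{T}\to\{0,1\}$ indicating whether an edge is present in a round. Its footprint $G=(V,E)$ is an undirected, unweighted, connected graph with $n=|V|$ anonymous nodes (no IDs); the edges at a node $v$ of degree $\delta_v$ carry locally unique port numbers $0,\dots,\delta_v-1$ (no relation between the two ports of an edge). Each node has a whiteboard which visiting agents can read, write and erase. One node of $G$ is a black hole, which destroys any agent that enters it without leaving a trace; all other nodes are safe. In $1$-BHS, in each round an adversary may remove at most one edge of $G$, provided the graph remains connected in every round. There are $k$ mobile agents initially at safe nodes, with distinct IDs from $[1,n^c]$ for a constant $c>1$ unknown to them; each knows its own ID but has no knowledge of $k$, $n$, the maximum degree, $\delta_{BH}$, the black hole, or missing edges. Execution is synchronous; in each round each agent at a safe node performs Look (reads the whiteboard, sees co-located agents and their parameters, learns whether its move attempt in the previous round succeeded), Compute (decides a port to move through, may write on the whiteboard), Move (attempts to traverse the chosen port; it succeeds iff the edge is present in that round, otherwise the agent stays). An agent knows the degree of its current node and the port through which it entered, but cannot detect whether an incident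 edge is missing except by trying to traverse it. Agents traversing the same edge do not see each other. The $1$-BHS problem is solved if at least one agent survives, learns at least one edge (port) leading to the black hole, and terminates. *)

theory Defs
  imports Complex_Main
begin

type_synonym bits = "bool list"

text \<open>Decision of an agent in a round: stay, try to move through a port, or
  terminate declaring that the given port of the current node leads to the black hole.\<close>
datatype action = Stay | Go nat | Halt nat

record agent =
  pos :: nat
  mem :: bits
  inport :: "nat option"
  lastok :: bool             \<comment> \<open>whether the move attempt of the previous round succeeded\<close>
  alive :: bool              \<comment> \<open>False once destroyed by the black hole\<close>
  halted :: "nat option"     \<comment> \<open>Some p once terminated, reporting port p\<close>

text \<open>An algorithm (the same for all agents): given own ID, own memory, degree of the
  current node, entry port, success of last move, whiteboard content, and the list
  (ID, memory, terminated?) of the other agents at the node, it returns new memory,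
  new whiteboard content and an action.\<close>
type_synonym algo =
  "nat \<Rightarrow> bits \<Rightarrow> nat \<Rightarrow> nat option \<Rightarrow> bool \<Rightarrow> bits \<Rightarrow> (nat \<times> bits \<times> bool) list
     \<Rightarrow> bits \<times> bits \<times> action"

text \<open>Instance: footprint with nodes 0..<nn, degree dg, port map nb (nb v p is the
  neighbour of v through port p), black hole bh, k agents with IDs ids i and start
  nodes start i (i < k).\<close>
record bhs_inst =
  nn :: nat
  dg :: "nat \<Rightarrow> nat"
  nb :: "nat \<Rightarrow> nat \<Rightarrow> nat"
  bh :: nat
  k :: nat
  ids :: "nat \<Rightarrow> nat"
  start :: "nat \<Rightarrow> nat"

definition edges :: "bhs_inst \<Rightarrow> nat set set" where
  "edges I = {{v, nb I v p} | v p. v < nn I \<and> p < dg I v}"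

definition connected_on :: "nat \<Rightarrow> nat set set \<Rightarrow> bool" where
  "connected_on n F \<longleftrightarrow> (\<forall>u<n. \<forall>w<n. (u, w) \<in> {(x, y). {x, y} \<in> F}\<^sup>*)"

definition valid_graph :: "bhs_inst \<Rightarrow> bool" where
  "valid_graph I \<longleftrightarrow>
     (\<forall>v<nn I. \<forall>p<dg I v. nb I v p < nn I \<and> nb I v p \<noteq> v) \<and>
     (\<forall>v<nn I. inj_on (nb I v) {..<dg I v}) \<and>
     (\<forall>v<nn I. \<forall>p<dg I v. \<exists>q<dg I (nb I v p). nb I (nb I v p) q = v) \<and>
     connected_on (nn I) (edges I)"

definition valid_inst :: "real \<Rightarrow> bhs_inst \<Rightarrow> bool" where
  "valid_inst c I \<longleftrightarrow>
     valid_graph I \<and> bh I < nn I \<and> 1 \<le> k I \<and> inj_on (ids I) {..<k I} \<and>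
     (\<forall>i<k I. 1 \<le> ids I i \<and> real (ids I i) \<le> real (nn I) powr c \<and>
              start I i < nn I \<and> start I i \<noteq> bh I)"

text \<open>1-adversary: F t is the set of edges missing in round t.\<close>
definition adversary :: "bhs_inst \<Rightarrow> (nat \<Rightarrow> nat set set) \<Rightarrow> bool" where
  "adversary I F \<longleftrightarrow>
     (\<forall>t. F t \<subseteq> edges I \<and> card (F t) \<le> 1 \<and> connected_on (nn I) (edges I - F t))"

definition active :: "agent \<Rightarrow> bool" where
  "active a \<longleftrightarrow> alive a \<and> halted a = None"

text \<open>Agents at the same node access the whiteboard sequentially in increasing ID
  order (each sees the writes of the previous ones); all see the co-located agents as
  they were at the beginning of the round.\<close>
fun proc :: "algo \<Rightarrow> (nat \<Rightarrow> nat) \<Rightarrow> (nat \<Rightarrow> agent) \<Rightarrow> nat \<Rightarrow> nat list \<Rightarrow> nat list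
               \<Rightarrow> bits \<Rightarrow> (nat \<times> bits \<times> action) list \<times> bits" where
  "proc A idf ag d here [] w = ([], w)"
| "proc A idf ag d here (i # is) w =
     (case A (idf i) (mem (ag i)) d (inport (ag i)) (lastok (ag i)) w
            (map (\<lambda>j. (idf j, mem (ag j), halted (ag j) \<noteq> None)) (filter (\<lambda>j. j \<noteq> i) here)) of
        (s', w', a) \<Rightarrow>
          (case proc A idf ag d here is w' of (r, wfin) \<Rightarrow> ((i, s', a) # r, wfin)))"

definition local_round :: "algo \<Rightarrow> bhs_inst \<Rightarrow> (nat \<Rightarrow> agent) \<Rightarrow> (nat \<Rightarrow> bits) \<Rightarrow> nat
                              \<Rightarrow> (nat \<times> bits \<times> action) list \<times> bits" where
  "local_round A I ag wb v =
     proc A (ids I) ag (dg I v)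
       (sort_key (ids I) (filter (\<lambda>i. alive (ag i) \<and> pos (ag i) = v) [0..<k I]))
       (sort_key (ids I) (filter (\<lambda>i. active (ag i) \<and> pos (ag i) = v) [0..<k I]))
       (wb v)"

definition backport :: "bhs_inst \<Rightarrow> nat \<Rightarrow> nat \<Rightarrow> nat" where
  "backport I u v = (THE q. q < dg I u \<and> nb I u q = v)"

definition apply_action :: "bhs_inst \<Rightarrow> nat set set \<Rightarrow> agent \<Rightarrow> bits \<Rightarrow> action \<Rightarrow> agent" where
  "apply_action I M a s' act =
     (case act of
        Stay \<Rightarrow> a\<lparr>mem := s', lastok := True\<rparr>
      | Halt p \<Rightarrow> a\<lparr>mem := s', halted := Some p\<rparr>
      | Go p \<Rightarrow>
          (if p < dg I (pos a) \<and> {pos a, nb I (pos a) p} \<notin> M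
           then a\<lparr>mem := s', pos := nb I (pos a) p,
                  inport := Some (backport I (nb I (pos a) p) (pos a)),
                  lastok := True, alive := (nb I (pos a) p \<noteq> bh I)\<rparr>
           else a\<lparr>mem := s', lastok := False\<rparr>))"

definition step :: "algo \<Rightarrow> bhs_inst \<Rightarrow> nat set set \<Rightarrow> (nat \<Rightarrow> agent) \<times> (nat \<Rightarrow> bits)
                       \<Rightarrow> (nat \<Rightarrow> agent) \<times> (nat \<Rightarrow> bits)" where
  "step A I M cfg =
     (case cfg of (ag, wb) \<Rightarrow>
       ((\<lambda>i. if i < k I \<and> active (ag i) then
               (case map_of (fst (local_round A I ag wb (pos (ag i)))) i of
                  None \<Rightarrow> ag i
                | Some (s', act) \<Rightarrow> apply_action I M (ag i) s' act)
             else ag i),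
        (\<lambda>v. snd (local_round A I ag wb v))))"

definition init_cfg :: "bhs_inst \<Rightarrow> (nat \<Rightarrow> agent) \<times> (nat \<Rightarrow> bits)" where
  "init_cfg I =
     ((\<lambda>i. \<lparr>pos = start I i, mem = [], inport = None, lastok = True,
            alive = (i < k I), halted = None\<rparr>), (\<lambda>v. []))"

primrec run :: "algo \<Rightarrow> bhs_inst \<Rightarrow> (nat \<Rightarrow> nat set set) \<Rightarrow> nat
                  \<Rightarrow> (nat \<Rightarrow> agent) \<times> (nat \<Rightarrow> bits)" where
  "run A I F 0 = init_cfg I"
| "run A I F (Suc t) = step A I (F t) (run A I F t)"

definition logmem :: "real \<Rightarrow> algo \<Rightarrow> bool" where
  "logmem c A \<longleftrightarrow>
     (\<exists>C. \<forall>I F t. valid_inst c I \<and> adversary I F \<longrightarrow>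
        (\<forall>i<k I. real (length (mem (fst (run A I F t) i))) \<le> C * (log 2 (real (nn I)) + 1)) \<and>
        (\<forall>v<nn I. real (length (snd (run A I F t) v)) \<le> C * (log 2 (real (nn I)) + 1)))"

definition solved :: "algo \<Rightarrow> bhs_inst \<Rightarrow> (nat \<Rightarrow> nat set set) \<Rightarrow> bool" where
  "solved A I F \<longleftrightarrow>
     (\<exists>t i p. i < k I \<and> alive (fst (run A I F t) i) \<and> halted (fst (run A I F t) i) = Some p \<and>
        p < dg I (pos (fst (run A I F t) i)) \<and> nb I (pos (fst (run A I F t) i)) p = bh I)"

end

theory Submission
  imports Defs
begin

text \<open>
  Take the paw graph: a hub 0 joined to 1, 2 and to the black hole 3, plus the edge 1--2, with
  both agents starting at the hub; the black hole has degree 1. Only the hub's port numbering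
  varies: in instance p, port p of the hub leads to the black hole. The adversary removes the
  edge through which an agent in the triangle 1--2 tries to move, so an agent that enters the
  triangle while the other agent is not there stays there forever. As long as nobody leaves
  the hub, the three instances cannot be told apart, and two agents cannot report three different
  ports. Otherwise let a be an agent leaving the hub first, through port p. If the other agent b
  leaves in the same round through port q, both are lost in instance q. Otherwise b, still at
  the hub, cannot distinguish instance p, where a has died, from an instance q \<noteq> p, where a is
  stuck in the triangle. If b never leaves the hub it reports the same port in instances p and q;
  if it eventually leaves through a port q', it dies in instance q' while a is stuck.
\<close>

type_synonym config = "(nat \<Rightarrow> agent) \<times> (nat \<Rightarrow> bits)"

definition decision :: "algo \<Rightarrow> bhs_inst \<Rightarrow> config \<Rightarrow> nat \<Rightarrow> (bits \<times> action) option" where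
  "decision A I cfg i = map_of (fst (local_round A I (fst cfg) (snd cfg) (pos (fst cfg i)))) i"

definition action_of :: "algo \<Rightarrow> bhs_inst \<Rightarrow> config \<Rightarrow> nat \<Rightarrow> action" where
  "action_of A I cfg i = (case decision A I cfg i of None \<Rightarrow> Stay | Some (_, act) \<Rightarrow> act)"

lemma map_fst_proc: "map fst (fst (proc A idf ag d here xs w)) = xs"
  by (induction xs arbitrary: w) (simp_all add: case_prod_beta)

lemma decision_Some_active:
  assumes "decision A I cfg i \<noteq> None"
  shows "i < k I \<and> active (fst cfg i)"
proof -
  have "i \<in> set (map fst (fst (local_round A I (fst cfg) (snd cfg) (pos (fst cfg i)))))"
    using assms by (simp add: decision_def map_of_eq_None_iff)
  then show ?thesis by (simp add: local_round_def map_fst_proc)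
qed

lemma action_of_Go_active: "action_of A I cfg i = Go j \<Longrightarrow> i < k I \<and> active (fst cfg i)"
  using decision_Some_active unfolding action_of_def by (fastforce split: option.splits)

lemma step_agent:
  "fst (step A I M cfg) i =
     (case decision A I cfg i of
        None \<Rightarrow> fst cfg i
      | Some (s', act) \<Rightarrow> apply_action I M (fst cfg i) s' act)"
  using decision_Some_active[of A I cfg i]
  by (cases cfg) (auto simp: step_def decision_def split: option.split)

lemma step_board: "snd (step A I M cfg) v = snd (local_round A I (fst cfg) (snd cfg) v)"
  by (cases cfg) (simp add: step_def)

lemma step_inactive: "\<not> active (fst cfg i) \<Longrightarrow> fst (step A I M cfg) i = fst cfg i"
  by (cases cfg) (simp add: step_def)

lemma step_beyond_agents: "\<not> i < k I \<Longrightarrow> fst (step A I M cfg) i = fst cfg i"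
  by (cases cfg) (simp add: step_def)

lemma step_no_move:
  assumes "\<And>j. action_of A I cfg i = Go j \<Longrightarrow> j < dg I (pos (fst cfg i)) \<Longrightarrow>
             {pos (fst cfg i), nb I (pos (fst cfg i)) j} \<in> M"
  shows "pos (fst (step A I M cfg) i) = pos (fst cfg i)"
    and "alive (fst (step A I M cfg) i) = alive (fst cfg i)"
proof -
  have "pos (fst (step A I M cfg) i) = pos (fst cfg i) \<and>
        alive (fst (step A I M cfg) i) = alive (fst cfg i)"
  proof (cases "decision A I cfg i")
    case (Some sa)
    then obtain s' act where "decision A I cfg i = Some (s', act)" by (cases sa) auto
    with assms show ?thesis
      by (cases act) (auto simp: step_agent action_of_def apply_action_def)
  qed (simp add: step_agent)
  then show "pos (fst (step A I M cfg) i) = pos (fst cfg i)"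
    and "alive (fst (step A I M cfg) i) = alive (fst cfg i)" by simp_all
qed

lemma step_Go:
  assumes "action_of A I cfg i = Go j" "j < dg I (pos (fst cfg i))"
    and "{pos (fst cfg i), nb I (pos (fst cfg i)) j} \<notin> M"
  shows "pos (fst (step A I M cfg) i) = nb I (pos (fst cfg i)) j"
    and "alive (fst (step A I M cfg) i) \<longleftrightarrow> nb I (pos (fst cfg i)) j \<noteq> bh I"
proof -
  obtain s' where "decision A I cfg i = Some (s', Go j)"
    using assms(1) unfolding action_of_def by (auto split: option.splits)
  then show "pos (fst (step A I M cfg) i) = nb I (pos (fst cfg i)) j"
    and "alive (fst (step A I M cfg) i) \<longleftrightarrow> nb I (pos (fst cfg i)) j \<noteq> bh I"
    using assms(2,3) by (simp_all add: step_agent apply_action_def)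
qed

lemma step_agent_cong:
  assumes "fst cfg1 i = fst cfg2 i" and "dg I1 (pos (fst cfg1 i)) = dg I2 (pos (fst cfg1 i))"
    and "local_round A I1 (fst cfg1) (snd cfg1) (pos (fst cfg1 i)) =
         local_round A I2 (fst cfg2) (snd cfg2) (pos (fst cfg1 i))"
    and "\<And>j. action_of A I1 cfg1 i = Go j \<Longrightarrow> \<not> j < dg I1 (pos (fst cfg1 i))"
  shows "fst (step A I1 M1 cfg1) i = fst (step A I2 M2 cfg2) i"
proof -
  have same: "decision A I1 cfg1 i = decision A I2 cfg2 i"
    using assms(1,3) by (simp add: decision_def)
  show ?thesis
  proof (cases "decision A I1 cfg1 i")
    case (Some sa)
    then obtain s' act where d1: "decision A I1 cfg1 i = Some (s', act)" by (cases sa) auto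
    moreover from d1 same have "decision A I2 cfg2 i = Some (s', act)" by simp
    ultimately show ?thesis using assms(1,2,4)
      by (cases act) (auto simp: step_agent action_of_def apply_action_def)
  qed (use same assms(1) in \<open>simp add: step_agent\<close>)
qed

lemma proc_cong:
  assumes "\<And>i. i \<in> set here \<Longrightarrow> ag1 i = ag2 i" "set xs \<subseteq> set here"
  shows "proc A idf ag1 d here xs w = proc A idf ag2 d here xs w"
  using assms(2)
proof (induction xs arbitrary: w)
  case (Cons i xs)
  have "ag1 i = ag2 i" using Cons.prems assms(1) by simp
  moreover have "map (\<lambda>j. (idf j, mem (ag1 j), halted (ag1 j) \<noteq> None)) (filter (\<lambda>j. j \<noteq> i) here) =
                 map (\<lambda>j. (idf j, mem (ag2 j), halted (ag2 j) \<noteq> None)) (filter (\<lambda>j. j \<noteq> i) here)"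
    using assms(1) by simp
  moreover have "\<And>w. proc A idf ag1 d here xs w = proc A idf ag2 d here xs w"
    using Cons by simp
  ultimately show ?case by (simp only: proc.simps)
qed simp

lemma local_round_cong:
  assumes "ids I1 = ids I2" "k I1 = k I2" "dg I1 v = dg I2 v" "wb1 v = wb2 v"
    and "\<And>i. i < k I1 \<Longrightarrow> alive (ag1 i) \<and> pos (ag1 i) = v \<longleftrightarrow> alive (ag2 i) \<and> pos (ag2 i) = v"
    and "\<And>i. i < k I1 \<Longrightarrow> alive (ag1 i) \<Longrightarrow> pos (ag1 i) = v \<Longrightarrow> ag1 i = ag2 i"
  shows "local_round A I1 ag1 wb1 v = local_round A I2 ag2 wb2 v"
proof -
  let ?present = "\<lambda>ag i. alive (ag i) \<and> pos (ag i) = v"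
  let ?acting = "\<lambda>ag i. active (ag i) \<and> pos (ag i) = v"
  have present: "filter (?present ag1) [0..<k I2] = filter (?present ag2) [0..<k I2]"
    using assms(2,5) by (intro filter_cong) auto
  have "?acting ag1 i \<longleftrightarrow> ?acting ag2 i" if "i < k I1" for i
    using assms(5,6)[OF that] unfolding active_def by (cases "?present ag1 i") auto
  then have acting: "filter (?acting ag1) [0..<k I2] = filter (?acting ag2) [0..<k I2]"
    using assms(2) by (intro filter_cong) auto
  have "proc A (ids I2) ag1 (dg I2 v) (sort_key (ids I2) (filter (?present ag2) [0..<k I2]))
          (sort_key (ids I2) (filter (?acting ag2) [0..<k I2])) (wb2 v) =
        proc A (ids I2) ag2 (dg I2 v) (sort_key (ids I2) (filter (?present ag2) [0..<k I2]))
          (sort_key (ids I2) (filter (?acting ag2) [0..<k I2])) (wb2 v)"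
    by (rule proc_cong) (use assms(2,5,6) in \<open>auto simp: active_def\<close>)
  then show ?thesis by (simp only: local_round_def present acting assms(1-4))
qed

section \<open>Runs against an adaptive adversary\<close>

text \<open>
  The adversary of \<^const>\<open>run\<close> is a fixed schedule of missing edges; an adversary that reacts
  to the configuration is obtained by running it along the configurations it produces.
\<close>

primrec adaptive_run :: "algo \<Rightarrow> bhs_inst \<Rightarrow> (config \<Rightarrow> nat set set) \<Rightarrow> nat \<Rightarrow> config" where
  "adaptive_run A I adv 0 = init_cfg I"
| "adaptive_run A I adv (Suc t) = step A I (adv (adaptive_run A I adv t)) (adaptive_run A I adv t)"

lemma run_adaptive_run: "run A I (\<lambda>t. adv (adaptive_run A I adv t)) t = adaptive_run A I adv t"
  by (induction t) simp_all

lemma adaptive_run_dead: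
  assumes "\<not> alive (fst (adaptive_run A I adv t) i)" "t \<le> t'"
  shows "\<not> alive (fst (adaptive_run A I adv t') i)"
  using assms(2,1) by (induction t' rule: dec_induct) (simp_all add: step_inactive active_def)

lemma adaptive_run_halted:
  assumes "halted (fst (adaptive_run A I adv t) i) = Some r" "t \<le> t'"
  shows "halted (fst (adaptive_run A I adv t') i) = Some r"
  using assms(2,1) by (induction t' rule: dec_induct) (simp_all add: step_inactive active_def)

lemma adaptive_run_halted_unique:
  assumes "halted (fst (adaptive_run A I adv t) i) = Some r"
    and "halted (fst (adaptive_run A I adv t') i) = Some r'"
  shows "r = r'"
  using adaptive_run_halted[OF assms(1), of "max t t'"]
    adaptive_run_halted[OF assms(2), of "max t t'"] by simp

lemma adaptive_run_not_halted_before_active: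
  assumes "active (fst (adaptive_run A I adv t) i)" "s \<le> t"
  shows "halted (fst (adaptive_run A I adv s) i) = None"
  using assms(1) adaptive_run_halted[of A I adv s i _ t, OF _ assms(2)]
  by (cases "halted (fst (adaptive_run A I adv s) i)") (auto simp: active_def)

lemma adaptive_run_killed_never_halts:
  assumes "active (fst (adaptive_run A I adv t) i)" "\<not> alive (fst (adaptive_run A I adv (Suc t)) i)"
  shows "\<not> alive (fst (adaptive_run A I adv s) i) \<or> halted (fst (adaptive_run A I adv s) i) = None"
proof (cases "s \<le> t")
  case True
  then show ?thesis using adaptive_run_not_halted_before_active[OF assms(1)] by simp
next
  case False
  then show ?thesis using adaptive_run_dead[OF assms(2), of s] by simp
qed

section \<open>The paw graph\<close>

definition paw_deg :: "nat \<Rightarrow> nat" where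
  "paw_deg v = (if v = 0 then 3 else if v = 3 then 1 else 2)"

text \<open>
  Port p of the hub 0 leads to the black hole 3, its other two ports lead to 1 and 2 in
  increasing order; at 1 and 2, port 0 leads to the hub and port 1 to the other one.
\<close>

definition paw_nb :: "nat \<Rightarrow> nat \<Rightarrow> nat \<Rightarrow> nat" where
  "paw_nb p v j =
     (if v = 0 then (if j = p then 3 else if j < p then j + 1 else j)
      else if v = 3 then 0 else if j = 0 then 0 else 3 - v)"

definition paw :: "nat \<Rightarrow> bhs_inst" where
  "paw p = \<lparr>nn = 4, dg = paw_deg, nb = paw_nb p, bh = 3, k = 2, ids = Suc, start = (\<lambda>_. 0)\<rparr>"

lemma paw_simps [simp]:
  "nn (paw p) = 4" "dg (paw p) = paw_deg" "nb (paw p) = paw_nb p" "bh (paw p) = 3"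
  "k (paw p) = 2" "ids (paw p) = Suc" "start (paw p) = (\<lambda>_. 0)"
  by (simp_all add: paw_def)

lemma less_3_cases: "(p::nat) < 3 \<Longrightarrow> p = 0 \<or> p = 1 \<or> p = 2" by auto

lemmas paw_eval = paw_nb_def paw_deg_def All_less_Suc Ex_less_Suc numeral_eq_Suc

lemma edges_paw: "p < 3 \<Longrightarrow> edges (paw p) = {{0, 1}, {0, 2}, {0, 3}, {1, 2}}"
proof -
  have "edges I = (\<Union>v<nn I. (\<lambda>j. {v, nb I v j}) ` {..<dg I v})" for I
    by (auto simp: edges_def)
  moreover assume "p < 3"
  ultimately show ?thesis
    by (elim less_3_cases[elim_format] disjE) (auto simp: paw_eval lessThan_Suc insert_commute)
qed

lemma connected_on_if_reachable:
  assumes "\<And>u. u < n \<Longrightarrow> (h, u) \<in> {(x, y). {x, y} \<in> F}\<^sup>*"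
  shows "connected_on n F"
proof -
  let ?R = "{(x, y). {x, y} \<in> F}"
  have "sym (?R\<^sup>*)" by (rule sym_rtrancl) (auto intro: symI simp: insert_commute)
  then show ?thesis
    unfolding connected_on_def using assms by (meson rtrancl_trans symD)
qed

lemma connected_paw_minus:
  assumes "B = {} \<or> B = {{0, 1}} \<or> B = {{0, 2}} \<or> B = {{1, 2}}"
  shows "connected_on 4 ({{0, 1}, {0, 2}, {0, 3}, {1, 2}} - B)"
proof (rule connected_on_if_reachable)
  fix u :: nat assume "u < 4"
  let ?R = "{(x, y). {x, y} \<in> {{0, 1}, {0, 2}, {0, 3}, {1, 2::nat}} - B}"
  have edge: "{x, y} \<in> {{0, 1}, {0, 2}, {0, 3}, {1, 2::nat}} - B \<Longrightarrow> (x, y) \<in> ?R\<^sup>*" for x y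
    by auto
  have "(0, 3) \<in> ?R\<^sup>*" using assms by (intro edge) (elim disjE; simp add: doubleton_eq_iff)
  moreover have "(0, 1) \<in> ?R\<^sup>*"
  proof (cases "B = {{0, 1}}")
    case True
    have "(0, 2) \<in> ?R\<^sup>*" by (rule edge) (simp add: True doubleton_eq_iff)
    also have "(2, 1) \<in> ?R\<^sup>*" by (rule edge) (simp add: True doubleton_eq_iff)
    finally show ?thesis .
  qed (use assms in \<open>intro edge, elim disjE; simp add: doubleton_eq_iff\<close>)
  moreover have "(0, 2) \<in> ?R\<^sup>*"
  proof (cases "B = {{0, 2}}")
    case True
    have "(0, 1) \<in> ?R\<^sup>*" by (rule edge) (simp add: True doubleton_eq_iff)
    also have "(1, 2) \<in> ?R\<^sup>*" by (rule edge) (simp add: True doubleton_eq_iff)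
    finally show ?thesis .
  qed (use assms in \<open>intro edge, elim disjE; simp add: doubleton_eq_iff\<close>)
  ultimately show "(0, u) \<in> ?R\<^sup>*" using \<open>u < 4\<close> by (auto simp: numeral_eq_Suc less_Suc_eq)
qed

lemma valid_graph_paw:
  assumes "p < 3" shows "valid_graph (paw p)"
proof -
  have "connected_on 4 {{0, 1}, {0, 2}, {0, 3}, {1, 2}}"
    using connected_paw_minus[of "{}"] by simp
  with assms show ?thesis
    unfolding valid_graph_def edges_paw[OF assms]
    by (elim less_3_cases[elim_format] disjE) (simp_all add: paw_eval inj_on_def)
qed

lemma valid_inst_paw:
  assumes "p < 3" "c > 1" shows "valid_inst c (paw p)"
proof -
  have "(2::real) \<le> 4 powr 1" by simp
  also have "\<dots> \<le> 4 powr c" using \<open>c > 1\<close> by (intro powr_mono) auto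
  finally show ?thesis
    using valid_graph_paw[OF \<open>p < 3\<close>] by (auto simp: valid_inst_def less_Suc_eq numeral_eq_Suc)
qed

lemma paw_nb_black_hole:
  assumes "p < 3" "j < paw_deg v" "paw_nb p v j = 3"
  shows "v = 0 \<and> j = p"
  using assms by (auto simp: paw_nb_def paw_deg_def split: if_splits)

lemma paw_nb_hub_self: "paw_nb p 0 p = 3"
  by (simp add: paw_nb_def)

lemma paw_nb_hub_other:
  assumes "p < 3" "q < 3" "p \<noteq> q"
  shows "paw_nb q 0 p = 1 \<or> paw_nb q 0 p = 2"
  using assms by (auto simp: paw_nb_def)

section \<open>The trapping adversary\<close>

text \<open>
  The adversary removes the edge through which an agent in the triangle tries to move (that of
  agent 0 if both try), so an agent alone in the triangle never leaves it.
\<close>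

definition trap_edge :: "algo \<Rightarrow> bhs_inst \<Rightarrow> config \<Rightarrow> nat \<Rightarrow> nat set set" where
  "trap_edge A I cfg i =
     (case action_of A I cfg i of
        Go j \<Rightarrow>
          if (pos (fst cfg i) = 1 \<or> pos (fst cfg i) = 2) \<and> j < 2
          then {{pos (fst cfg i), nb I (pos (fst cfg i)) j}} else {}
      | _ \<Rightarrow> {})"

definition trap :: "algo \<Rightarrow> bhs_inst \<Rightarrow> config \<Rightarrow> nat set set" where
  "trap A I cfg = (if trap_edge A I cfg 0 \<noteq> {} then trap_edge A I cfg 0 else trap_edge A I cfg 1)"

abbreviation paw_run :: "algo \<Rightarrow> nat \<Rightarrow> nat \<Rightarrow> config" where
  "paw_run A p \<equiv> adaptive_run A (paw p) (trap A (paw p))"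

lemma trap_edge_cases:
  "trap_edge A (paw p) cfg i = {} \<or> trap_edge A (paw p) cfg i = {{0, 1}} \<or>
   trap_edge A (paw p) cfg i = {{0, 2}} \<or> trap_edge A (paw p) cfg i = {{1, 2}}"
proof -
  have "{x, paw_nb p x j} = {0, 1} \<or> {x, paw_nb p x j} = {0, 2} \<or> {x, paw_nb p x j} = {1, 2}"
    if "x = 1 \<or> x = 2" "j < 2" for x j :: nat
    using that(1) less_2_cases[OF that(2)] by (elim disjE) (simp_all add: paw_nb_def insert_commute)
  then show ?thesis unfolding trap_edge_def by (simp split: action.split)
qed

lemma trap_cases:
  "trap A (paw p) cfg = {} \<or> trap A (paw p) cfg = {{0, 1}} \<or>
   trap A (paw p) cfg = {{0, 2}} \<or> trap A (paw p) cfg = {{1, 2}}"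
  using trap_edge_cases[of A p cfg 0] trap_edge_cases[of A p cfg 1] unfolding trap_def
  by (cases "trap_edge A (paw p) cfg 0 = {}") simp_all

lemma adversary_trap:
  assumes "p < 3" shows "adversary (paw p) (\<lambda>t. trap A (paw p) (paw_run A p t))"
  unfolding adversary_def edges_paw[OF assms] paw_simps
proof
  fix t
  show "trap A (paw p) (paw_run A p t) \<subseteq> {{0, 1}, {0, 2}, {0, 3}, {1, 2}} \<and>
        card (trap A (paw p) (paw_run A p t)) \<le> 1 \<and>
        connected_on 4 ({{0, 1}, {0, 2}, {0, 3}, {1, 2}} - trap A (paw p) (paw_run A p t))"
    using trap_cases[of A p "paw_run A p t"]
      connected_paw_minus[of "trap A (paw p) (paw_run A p t)"] by (elim disjE) simp_all
qed

lemma hub_edge_not_trapped: "{0, 3} \<notin> trap A (paw p) cfg"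
  using trap_cases[of A p cfg] by (elim disjE) (simp_all add: doubleton_eq_iff)

definition at_hub :: "config \<Rightarrow> bool" where
  "at_hub cfg \<longleftrightarrow> (\<forall>i<2. pos (fst cfg i) = 0 \<and> alive (fst cfg i))"

lemma trap_at_hub: "at_hub cfg \<Longrightarrow> trap A I cfg = {}"
  by (simp add: at_hub_def trap_def trap_edge_def split: action.split)

lemma trapped_step:
  assumes "a < 2" "b < 2" "a \<noteq> b" "pos (fst cfg a) = 1 \<or> pos (fst cfg a) = 2"
    and "active (fst cfg b) \<Longrightarrow> pos (fst cfg b) = 0"
  shows "pos (fst (step A (paw p) (trap A (paw p) cfg) cfg) a) = pos (fst cfg a)"
proof -
  have "trap_edge A (paw p) cfg b = {}"
  proof (cases "action_of A (paw p) cfg b")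
    case (Go j)
    then show ?thesis using action_of_Go_active[OF Go] assms(5) by (simp add: trap_edge_def)
  qed (simp_all add: trap_edge_def)
  moreover have "a = 0 \<and> b = 1 \<or> a = 1 \<and> b = 0" using assms(1-3) by auto
  ultimately have trap: "trap A (paw p) cfg = trap_edge A (paw p) cfg a"
    by (elim disjE) (simp_all add: trap_def)
  have "{pos (fst cfg a), paw_nb p (pos (fst cfg a)) j} \<in> trap A (paw p) cfg"
    if "action_of A (paw p) cfg a = Go j" "j < paw_deg (pos (fst cfg a))" for j
    using that assms(4) unfolding trap trap_edge_def by (auto simp: paw_deg_def)
  then show ?thesis by (intro step_no_move) simp
qed

lemma paw_run_trapped:
  assumes "a < 2" "b < 2" "a \<noteq> b" "pos (fst (paw_run A p t) a) = x" "x = 1 \<or> x = 2"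
    and "\<And>s. t \<le> s \<Longrightarrow> active (fst (paw_run A p s) b) \<Longrightarrow> pos (fst (paw_run A p s) b) = 0"
    and "t \<le> t'"
  shows "pos (fst (paw_run A p t') a) = x"
  using assms(7,4)
proof (induction t' rule: dec_induct)
  case (step s)
  then show ?case using trapped_step[OF assms(1-3)] assms(5,6) by simp
qed

lemma paw_run_leave_hub:
  assumes "pos (fst (paw_run A p t) i) = 0" "action_of A (paw p) (paw_run A p t) i = Go j" "j < 3"
    and "{0, paw_nb p 0 j} \<notin> trap A (paw p) (paw_run A p t)"
  shows "pos (fst (paw_run A p (Suc t)) i) = paw_nb p 0 j"
    and "alive (fst (paw_run A p (Suc t)) i) \<longleftrightarrow> paw_nb p 0 j \<noteq> 3"
  using step_Go[OF assms(2)] assms(1,3,4) by (simp_all add: paw_deg_def)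

lemma paw_run_enter_black_hole:
  assumes "p < 3" "pos (fst (paw_run A p t) i) = 0" "action_of A (paw p) (paw_run A p t) i = Go p"
  shows "\<not> alive (fst (paw_run A p (Suc t)) i)"
  using paw_run_leave_hub(2)[OF assms(2,3,1)] hub_edge_not_trapped by (simp add: paw_nb_hub_self)

definition hub_report :: "algo \<Rightarrow> nat \<Rightarrow> nat \<Rightarrow> bool" where
  "hub_report A p i \<longleftrightarrow>
     (\<exists>t. alive (fst (paw_run A p t) i) \<and> pos (fst (paw_run A p t) i) = 0 \<and>
          halted (fst (paw_run A p t) i) = Some p)"

lemma solved_paw_hub_report:
  assumes "p < 3" "solved A (paw p) (\<lambda>t. trap A (paw p) (paw_run A p t))"
  shows "\<exists>i<2. hub_report A p i"
  using assms(2) paw_nb_black_hole[OF assms(1)]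
  unfolding solved_def run_adaptive_run hub_report_def by fastforce

lemma killed_no_hub_report:
  assumes "active (fst (paw_run A p t) i)" "\<not> alive (fst (paw_run A p (Suc t)) i)"
  shows "\<not> hub_report A p i"
  using adaptive_run_killed_never_halts[OF assms] by (auto simp: hub_report_def)

lemma trapped_no_hub_report:
  assumes "active (fst (paw_run A p t) i)" "\<And>s. t < s \<Longrightarrow> pos (fst (paw_run A p s) i) \<noteq> 0"
  shows "\<not> hub_report A p i"
  unfolding hub_report_def
proof clarify
  fix s assume "pos (fst (paw_run A p s) i) = 0" "halted (fst (paw_run A p s) i) = Some p"
  then show False
    using adaptive_run_not_halted_before_active[OF assms(1)] assms(2) by (cases "s \<le> t") auto
qed

lemma solved_other_hub_report:
  assumes "p < 3" "solved A (paw p) (\<lambda>t. trap A (paw p) (paw_run A p t))"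
    and "a < 2" "b < 2" "a \<noteq> b" "\<not> hub_report A p a"
  shows "hub_report A p b"
proof -
  obtain i where "i < 2" "hub_report A p i" using solved_paw_hub_report[OF assms(1,2)] by blast
  moreover from this(2) assms(6) have "i \<noteq> a" by auto
  ultimately show ?thesis using assms(3-5) by (metis less_2_cases)
qed

lemma unsolved_if_both_killed:
  assumes "p < 3" "a < 2" "b < 2" "a \<noteq> b"
    and "active (fst (paw_run A p ta) a)" "\<not> alive (fst (paw_run A p (Suc ta)) a)"
    and "active (fst (paw_run A p tb) b)" "\<not> alive (fst (paw_run A p (Suc tb)) b)"
  shows "\<not> solved A (paw p) (\<lambda>t. trap A (paw p) (paw_run A p t))"
  using solved_other_hub_report[OF assms(1) _ assms(2-4)]
    killed_no_hub_report[OF assms(5,6)] killed_no_hub_report[OF assms(7,8)] by blast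

lemma unsolved_if_trapped_then_killed:
  assumes "p < 3" "a < 2" "b < 2" "a \<noteq> b"
    and "active (fst (paw_run A p ta) a)"
    and "pos (fst (paw_run A p (Suc ta)) a) = 1 \<or> pos (fst (paw_run A p (Suc ta)) a) = 2"
    and "\<And>s. ta < s \<Longrightarrow> s \<le> tb \<Longrightarrow> pos (fst (paw_run A p s) b) = 0"
    and "active (fst (paw_run A p tb) b)" "\<not> alive (fst (paw_run A p (Suc tb)) b)"
  shows "\<not> solved A (paw p) (\<lambda>t. trap A (paw p) (paw_run A p t))"
proof -
  have b_at_hub: "pos (fst (paw_run A p s) b) = 0"
    if "Suc ta \<le> s" "active (fst (paw_run A p s) b)" for s
  proof (cases "s \<le> tb")
    case False
    then have "\<not> alive (fst (paw_run A p s) b)" using adaptive_run_dead[OF assms(9)] by simp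
    with that(2) show ?thesis by (simp add: active_def)
  qed (use assms(7) that in simp)
  have "pos (fst (paw_run A p s) a) = pos (fst (paw_run A p (Suc ta)) a)" if "ta < s" for s
    using paw_run_trapped[OF assms(2-4) refl assms(6) b_at_hub] that by simp
  then have "\<not> hub_report A p a" using trapped_no_hub_report[OF assms(5)] assms(6) by force
  then show ?thesis
    using solved_other_hub_report[OF assms(1) _ assms(2-4)] killed_no_hub_report[OF assms(8,9)]
    by blast
qed

section \<open>Indistinguishability at the hub\<close>

definition departs :: "algo \<Rightarrow> config \<Rightarrow> nat \<Rightarrow> bool" where
  "departs A cfg i \<longleftrightarrow> (\<exists>j<3. action_of A (paw 0) cfg i = Go j)"
  \<comment> \<open>The choice of instance is immaterial, see \<open>action_of_paw\<close>.\<close>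

lemma local_round_paw: "local_round A (paw p) ag wb v = local_round A (paw q) ag wb v"
  by (simp add: local_round_def)

lemma action_of_paw: "action_of A (paw p) cfg i = action_of A (paw q) cfg i"
  unfolding action_of_def decision_def local_round_def by simp

lemma step_paw_stay_at_hub:
  assumes "fst cfg1 i = fst cfg2 i" "pos (fst cfg1 i) = 0" "\<not> departs A cfg1 i"
    and "local_round A (paw p) (fst cfg1) (snd cfg1) 0 =
         local_round A (paw q) (fst cfg2) (snd cfg2) 0"
  shows "fst (step A (paw p) M cfg1) i = fst (step A (paw q) M' cfg2) i"
    and "pos (fst (step A (paw p) M cfg1) i) = 0"
    and "alive (fst (step A (paw p) M cfg1) i) = alive (fst cfg1 i)"
proof -
  have stuck: "\<not> j < paw_deg (pos (fst cfg1 i))" if "action_of A (paw p) cfg1 i = Go j" for j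
    using assms(2,3) that action_of_paw[of A p cfg1 i 0] by (auto simp: departs_def paw_deg_def)
  show "fst (step A (paw p) M cfg1) i = fst (step A (paw q) M' cfg2) i"
    using assms(1,2,4) stuck by (intro step_agent_cong) simp_all
  show "pos (fst (step A (paw p) M cfg1) i) = 0"
    and "alive (fst (step A (paw p) M cfg1) i) = alive (fst cfg1 i)"
    using step_no_move[of A "paw p" cfg1 i M] stuck assms(2) by simp_all
qed

lemma step_paw_at_hub:
  assumes "at_hub cfg" "\<And>i. i < 2 \<Longrightarrow> \<not> departs A cfg i"
  shows "step A (paw p) M cfg = step A (paw q) M' cfg" and "at_hub (step A (paw p) M cfg)"
proof -
  note stay = step_paw_stay_at_hub[OF refl _ _ local_round_paw]
  have "fst (step A (paw p) M cfg) i = fst (step A (paw q) M' cfg) i" for i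
    using assms stay(1) by (cases "i < 2") (simp_all add: at_hub_def step_beyond_agents)
  moreover have "snd (step A (paw p) M cfg) v = snd (step A (paw q) M' cfg) v" for v
    by (simp add: step_board local_round_paw[of A p _ _ _ q])
  ultimately show "step A (paw p) M cfg = step A (paw q) M' cfg"
    by (simp add: prod_eq_iff fun_eq_iff)
  show "at_hub (step A (paw p) M cfg)"
    using assms stay(2,3) by (simp add: at_hub_def)
qed

lemma paw_runs_agree_at_hub:
  assumes "\<And>s i. s < t \<Longrightarrow> i < 2 \<Longrightarrow> \<not> departs A (paw_run A 0 s) i"
  shows "paw_run A p t = paw_run A 0 t \<and> at_hub (paw_run A 0 t)"
  using assms
proof (induction t)
  case 0
  show ?case by (simp add: init_cfg_def at_hub_def)
next
  case (Suc t)
  then have "paw_run A p t = paw_run A 0 t" "at_hub (paw_run A 0 t)"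
    and "\<And>i. i < 2 \<Longrightarrow> \<not> departs A (paw_run A 0 t) i" by auto
  then show ?case using step_paw_at_hub by simp
qed

lemma unsolved_if_none_departs:
  assumes "\<And>s i. i < 2 \<Longrightarrow> \<not> departs A (paw_run A 0 s) i"
  shows "\<exists>p<3. \<not> solved A (paw p) (\<lambda>t. trap A (paw p) (paw_run A p t))"
proof (rule ccontr)
  assume "\<not> ?thesis"
  then have "\<exists>i<2. hub_report A p i" if "p < 3" for p
    using solved_paw_hub_report that by blast
  moreover have "paw_run A p t = paw_run A 0 t" for p t
    using paw_runs_agree_at_hub assms by blast
  ultimately have "\<exists>i<2. \<exists>t. halted (fst (paw_run A 0 t) i) = Some p" if "p < 3" for p
    using that unfolding hub_report_def by metis
  from this[of 0] this[of 1] this[of 2] obtain i0 i1 i2 t0 t1 t2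
    where "i0 < 2" "i1 < 2" "i2 < 2"
      and h0: "halted (fst (paw_run A 0 t0) i0) = Some 0"
      and h1: "halted (fst (paw_run A 0 t1) i1) = Some 1"
      and h2: "halted (fst (paw_run A 0 t2) i2) = Some 2"
    by auto
  then have "i0 = i1 \<or> i0 = i2 \<or> i1 = i2" by auto
  then show False
  proof (elim disjE)
    assume "i0 = i1"
    then show False using adaptive_run_halted_unique[OF h0, of t1 1] h1 by simp
  next
    assume "i0 = i2"
    then show False using adaptive_run_halted_unique[OF h0, of t2 2] h2 by simp
  next
    assume "i1 = i2"
    then show False using adaptive_run_halted_unique[OF h1, of t2 2] h2 by simp
  qed
qed

text \<open>
  Agent b, alone at the hub, cannot tell a run in which a has died from one in which a is
  stuck in the triangle.
\<close>

definition hub_indistinguishable :: "nat \<Rightarrow> nat \<Rightarrow> config \<Rightarrow> config \<Rightarrow> bool" where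
  "hub_indistinguishable a b cfg1 cfg2 \<longleftrightarrow>
     fst cfg1 b = fst cfg2 b \<and> pos (fst cfg1 b) = 0 \<and> alive (fst cfg1 b) \<and> snd cfg1 0 = snd cfg2 0 \<and>
     \<not> alive (fst cfg1 a) \<and> (pos (fst cfg2 a) = 1 \<or> pos (fst cfg2 a) = 2)"

lemma hub_indistinguishable_local_round:
  assumes "hub_indistinguishable a b cfg1 cfg2" "a < 2" "b < 2" "a \<noteq> b"
  shows "local_round A (paw p) (fst cfg1) (snd cfg1) 0 =
         local_round A (paw q) (fst cfg2) (snd cfg2) 0"
proof (rule local_round_cong)
  fix i assume "i < k (paw p)"
  then have "i = a \<or> i = b" using assms(2-4) by auto
  with assms(1)
  show "alive (fst cfg1 i) \<and> pos (fst cfg1 i) = 0 \<longleftrightarrow> alive (fst cfg2 i) \<and> pos (fst cfg2 i) = 0"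
    and "alive (fst cfg1 i) \<Longrightarrow> pos (fst cfg1 i) = 0 \<Longrightarrow> fst cfg1 i = fst cfg2 i"
    unfolding hub_indistinguishable_def by auto
qed (use assms(1) in \<open>simp_all add: hub_indistinguishable_def\<close>)

lemma hub_indistinguishable_action_of:
  assumes "hub_indistinguishable a b cfg1 cfg2" "a < 2" "b < 2" "a \<noteq> b"
  shows "action_of A (paw p) cfg1 b = action_of A (paw q) cfg2 b"
proof -
  have "pos (fst cfg1 b) = 0" "pos (fst cfg2 b) = 0"
    using assms(1) unfolding hub_indistinguishable_def by auto
  then show ?thesis
    using hub_indistinguishable_local_round[OF assms, of A p q]
    unfolding action_of_def decision_def by simp
qed

lemma hub_indistinguishable_step:
  assumes "hub_indistinguishable a b cfg1 cfg2" "a < 2" "b < 2" "a \<noteq> b" "\<not> departs A cfg1 b"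
  shows "hub_indistinguishable a b (step A (paw p) (trap A (paw p) cfg1) cfg1)
           (step A (paw q) (trap A (paw q) cfg2) cfg2)"
proof -
  note round = hub_indistinguishable_local_round[OF assms(1-4), of A p q]
  have b: "fst cfg1 b = fst cfg2 b" "pos (fst cfg1 b) = 0" "alive (fst cfg1 b)"
    and a: "\<not> alive (fst cfg1 a)" "pos (fst cfg2 a) = 1 \<or> pos (fst cfg2 a) = 2"
    using assms(1) unfolding hub_indistinguishable_def by auto
  let ?cfg1' = "step A (paw p) (trap A (paw p) cfg1) cfg1"
  let ?cfg2' = "step A (paw q) (trap A (paw q) cfg2) cfg2"
  have "fst ?cfg1' b = fst ?cfg2' b" "pos (fst ?cfg1' b) = 0" "alive (fst ?cfg1' b)"
    using step_paw_stay_at_hub[OF b(1,2) assms(5) round] b(3) by simp_all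
  moreover have "snd ?cfg1' 0 = snd ?cfg2' 0" using round by (simp add: step_board)
  moreover have "\<not> alive (fst ?cfg1' a)" using a(1) by (simp add: step_inactive active_def)
  moreover have "pos (fst ?cfg2' a) = pos (fst cfg2 a)"
    using trapped_step[OF assms(2-4) a(2)] b(1,2) by simp
  ultimately show ?thesis using a(2) unfolding hub_indistinguishable_def by simp
qed

lemma paw_runs_hub_indistinguishable:
  assumes "hub_indistinguishable a b (paw_run A p t) (paw_run A q t)" "a < 2" "b < 2" "a \<noteq> b"
    and "\<And>s. t \<le> s \<Longrightarrow> s < t' \<Longrightarrow> \<not> departs A (paw_run A p s) b" and "t \<le> t'"
  shows "hub_indistinguishable a b (paw_run A p t') (paw_run A q t')"
  using assms(6,1,5)
proof (induction t' rule: dec_induct)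
  case (step s)
  then show ?case using hub_indistinguishable_step[OF _ assms(2-4)] by simp
qed

section \<open>The first departure from the hub\<close>

locale first_departure =
  fixes A :: algo and C :: config and t a b p :: nat
  assumes runs_agree: "\<And>r. paw_run A r t = C" and at_hub: "at_hub C"
    and agents: "a < 2" "b < 2" "a \<noteq> b"
    and a_departs: "action_of A (paw 0) C a = Go p" "p < 3"
begin

lemma depart_from_hub:
  assumes "action_of A (paw 0) C i = Go j" "j < 3"
  shows "pos (fst (paw_run A r (Suc t)) i) = paw_nb r 0 j"
    and "alive (fst (paw_run A r (Suc t)) i) \<longleftrightarrow> paw_nb r 0 j \<noteq> 3"
    and "active (fst (paw_run A r t) i)"
proof -
  have "i < 2" "active (fst C i)" using action_of_Go_active[OF assms(1)] by simp_all
  then have hub: "pos (fst (paw_run A r t) i) = 0" using runs_agree at_hub by (simp add: at_hub_def)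
  have go: "action_of A (paw r) (paw_run A r t) i = Go j"
    using assms(1) runs_agree action_of_paw[of A r C i 0] by simp
  have "{0, paw_nb r 0 j} \<notin> trap A (paw r) (paw_run A r t)"
    using runs_agree at_hub trap_at_hub by simp
  from paw_run_leave_hub[OF hub go assms(2) this]
  show "pos (fst (paw_run A r (Suc t)) i) = paw_nb r 0 j"
    and "alive (fst (paw_run A r (Suc t)) i) \<longleftrightarrow> paw_nb r 0 j \<noteq> 3" by simp_all
  show "active (fst (paw_run A r t) i)" using \<open>active (fst C i)\<close> runs_agree by simp
qed

lemma a_killed: "\<not> alive (fst (paw_run A p (Suc t)) a)"
  using depart_from_hub(2)[OF a_departs] by (simp add: paw_nb_hub_self)

lemma unsolved_if_both_depart:
  assumes "action_of A (paw 0) C b = Go q" "q < 3"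
  shows "\<exists>r<3. \<not> solved A (paw r) (\<lambda>t. trap A (paw r) (paw_run A r t))"
proof -
  have b_killed: "\<not> alive (fst (paw_run A q (Suc t)) b)"
    using depart_from_hub(2)[OF assms] by (simp add: paw_nb_hub_self)
  have "\<not> solved A (paw q) (\<lambda>t. trap A (paw q) (paw_run A q t))"
  proof (cases "p = q")
    case True
    then show ?thesis
      using unsolved_if_both_killed[OF assms(2) agents] a_killed b_killed
        depart_from_hub(3)[OF a_departs] depart_from_hub(3)[OF assms] by blast
  next
    case False
    then show ?thesis
      using unsolved_if_trapped_then_killed[OF assms(2) agents, where ta = t and tb = t] b_killed
        depart_from_hub(3)[OF a_departs] depart_from_hub(3)[OF assms]
        depart_from_hub(1)[OF a_departs] paw_nb_hub_other[OF a_departs(2) assms(2)] by simp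
  qed
  with assms(2) show ?thesis by blast
qed

end

locale lone_departure = first_departure +
  assumes b_stays: "\<not> departs A C b"
begin

lemma indistinguishable_after_departure:
  assumes "q < 3" "q \<noteq> p"
  shows "hub_indistinguishable a b (paw_run A p (Suc t)) (paw_run A q (Suc t))"
proof -
  have b: "pos (fst C b) = 0" "alive (fst C b)" using at_hub agents by (auto simp: at_hub_def)
  note stay = step_paw_stay_at_hub(1)[where p = p and q = q and M = "trap A (paw p) C"
      and M' = "trap A (paw q) C", OF refl b(1) b_stays local_round_paw]
    step_paw_stay_at_hub(2,3)[where p = p and q = q and M = "trap A (paw p) C",
      OF refl b(1) b_stays local_round_paw]
  have "pos (fst (paw_run A q (Suc t)) a) = paw_nb q 0 p" by (rule depart_from_hub(1)[OF a_departs])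
  then show ?thesis
    using paw_nb_hub_other[OF a_departs(2) assms(1) assms(2)[symmetric]] a_killed stay b runs_agree
    unfolding hub_indistinguishable_def by (simp add: step_board local_round_paw[of A p _ _ _ q])
qed

lemma unsolved_if_other_stays:
  assumes "\<And>s. Suc t \<le> s \<Longrightarrow> \<not> departs A (paw_run A p s) b"
  shows "\<exists>r<3. \<not> solved A (paw r) (\<lambda>t. trap A (paw r) (paw_run A r t))"
proof (rule ccontr)
  define q :: nat where "q = (if p = 0 then 1 else 0)"
  have q: "q < 3" "q \<noteq> p" by (auto simp: q_def)
  have indist: "hub_indistinguishable a b (paw_run A p s) (paw_run A q s)" if "Suc t \<le> s" for s
    using paw_runs_hub_indistinguishable[OF indistinguishable_after_departure[OF q] agents]
      assms that by blast
  have "\<not> hub_report A p a"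
    using killed_no_hub_report depart_from_hub(3)[OF a_departs] a_killed by blast
  moreover have "\<not> hub_report A q a"
  proof (rule trapped_no_hub_report[OF depart_from_hub(3)[OF a_departs]])
    show "pos (fst (paw_run A q s) a) \<noteq> 0" if "t < s" for s
      using indist[of s] that unfolding hub_indistinguishable_def by auto
  qed
  moreover assume "\<not> ?thesis"
  ultimately have "hub_report A p b" "hub_report A q b"
    using solved_other_hub_report[OF _ _ agents] a_departs(2) q(1) by blast+
  then obtain s1 s2 where halted: "halted (fst (paw_run A p s1) b) = Some p"
      "halted (fst (paw_run A q s2) b) = Some q"
    unfolding hub_report_def by blast
  define T where "T = Suc t + s1 + s2"
  have "Suc t \<le> T" "s1 \<le> T" "s2 \<le> T" by (simp_all add: T_def)
  then have "fst (paw_run A p T) b = fst (paw_run A q T) b"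
    and "halted (fst (paw_run A p T) b) = Some p" "halted (fst (paw_run A q T) b) = Some q"
    using indist[of T] adaptive_run_halted[OF halted(1)] adaptive_run_halted[OF halted(2)]
    unfolding hub_indistinguishable_def by blast+
  with q(2) show False by simp
qed

lemma unsolved_if_other_departs_later:
  assumes "Suc t \<le> t'" "\<And>s. Suc t \<le> s \<Longrightarrow> s < t' \<Longrightarrow> \<not> departs A (paw_run A p s) b"
    and "action_of A (paw 0) (paw_run A p t') b = Go q" "q < 3"
  shows "\<exists>r<3. \<not> solved A (paw r) (\<lambda>t. trap A (paw r) (paw_run A r t))"
proof -
  have indist: "hub_indistinguishable a b (paw_run A p s) (paw_run A r s)"
    if "r < 3" "r \<noteq> p" "Suc t \<le> s" "s \<le> t'" for r s
    using paw_runs_hub_indistinguishable[OF indistinguishable_after_departure[OF that(1,2)] agents]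
      assms(2) that(3,4) by auto
  have b_active: "active (fst (paw_run A p t') b)" using action_of_Go_active[OF assms(3)] by simp
  show ?thesis
  proof (cases "q = p")
    case True
    define r :: nat where "r = (if p = 0 then 1 else 0)"
    have "pos (fst (paw_run A p t') b) = 0"
      using indist[of r t'] assms(1) unfolding r_def hub_indistinguishable_def by auto
    then have "\<not> alive (fst (paw_run A p (Suc t')) b)"
      using paw_run_enter_black_hole[OF a_departs(2)] assms(3) True action_of_paw[of A p _ b 0]
      by simp
    from unsolved_if_both_killed[OF a_departs(2) agents depart_from_hub(3)[OF a_departs] a_killed
        b_active this]
    show ?thesis using a_departs(2) by blast
  next
    case False
    note indist_q = indist[OF assms(4) False]
    have b_q: "fst (paw_run A q t') b = fst (paw_run A p t') b" "pos (fst (paw_run A q t') b) = 0"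
      using indist_q[of t'] assms(1) unfolding hub_indistinguishable_def by auto
    have "action_of A (paw q) (paw_run A q t') b = Go q"
      using hub_indistinguishable_action_of[where A = A and p = p and q = q,
          OF indist_q[of t'] agents]
        assms(1,3) action_of_paw[of A p _ b 0]
      by simp
    then have b_killed: "\<not> alive (fst (paw_run A q (Suc t')) b)"
      by (rule paw_run_enter_black_hole[OF assms(4) b_q(2)])
    have b_at_hub: "pos (fst (paw_run A q s) b) = 0" if "t < s" "s \<le> t'" for s
      using indist_q[of s] that unfolding hub_indistinguishable_def by auto
    have a_trapped: "pos (fst (paw_run A q (Suc t)) a) = 1 \<or> pos (fst (paw_run A q (Suc t)) a) = 2"
      using indist_q[of "Suc t"] assms(1) unfolding hub_indistinguishable_def by auto
    have "active (fst (paw_run A q t') b)" using b_active b_q(1) by simp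
    from unsolved_if_trapped_then_killed[OF assms(4) agents depart_from_hub(3)[OF a_departs]
        a_trapped b_at_hub this b_killed]
    have "\<not> solved A (paw q) (\<lambda>t. trap A (paw q) (paw_run A q t))" .
    with assms(4) show ?thesis by blast
  qed
qed

lemma some_paw_unsolved: "\<exists>r<3. \<not> solved A (paw r) (\<lambda>t. trap A (paw r) (paw_run A r t))"
proof (cases "\<exists>s. Suc t \<le> s \<and> departs A (paw_run A p s) b")
  case False
  then have "\<not> departs A (paw_run A p s) b" if "Suc t \<le> s" for s using that by blast
  then show ?thesis by (rule unsolved_if_other_stays)
next
  case True
  define t' where "t' = (LEAST s. Suc t \<le> s \<and> departs A (paw_run A p s) b)"
  have "Suc t \<le> t' \<and> departs A (paw_run A p t') b"
    unfolding t'_def by (rule LeastI_ex[OF True])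
  then obtain q where t': "Suc t \<le> t'"
    and go: "action_of A (paw 0) (paw_run A p t') b = Go q" "q < 3"
    unfolding departs_def by blast
  have "\<not> departs A (paw_run A p s) b" if "Suc t \<le> s" "s < t'" for s
  proof -
    have "\<not> (Suc t \<le> s \<and> departs A (paw_run A p s) b)"
      using that(2) unfolding t'_def by (rule not_less_Least)
    with that(1) show ?thesis by blast
  qed
  from unsolved_if_other_departs_later[OF t' this go] show ?thesis .
qed

end

lemma paw_unsolvable: "\<exists>p<3. \<not> solved A (paw p) (\<lambda>t. trap A (paw p) (paw_run A p t))"
proof (cases "\<exists>s i. i < 2 \<and> departs A (paw_run A 0 s) i")
  case False
  then show ?thesis by (intro unsolved_if_none_departs) blast
next
  case True
  define t where "t = (LEAST s. \<exists>i<2. departs A (paw_run A 0 s) i)"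
  obtain a where a: "a < 2" "departs A (paw_run A 0 t) a"
    using LeastI_ex[of "\<lambda>s. \<exists>i<2. departs A (paw_run A 0 s) i"] True unfolding t_def by blast
  have "\<not> departs A (paw_run A 0 s) i" if "s < t" "i < 2" for s i
    using not_less_Least[of s "\<lambda>s. \<exists>i<2. departs A (paw_run A 0 s) i"] that unfolding t_def by blast
  then have "paw_run A r t = paw_run A 0 t" "at_hub (paw_run A 0 t)" for r
    using paw_runs_agree_at_hub by blast+
  moreover obtain p where "action_of A (paw 0) (paw_run A 0 t) a = Go p" "p < 3"
    using a(2) unfolding departs_def by blast
  moreover have "1 - a < 2" "a \<noteq> 1 - a" using a(1) by arith+
  ultimately interpret first_departure A "paw_run A 0 t" t a "1 - a" p
    using a(1) by unfold_locales
  show ?thesis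
  proof (cases "departs A (paw_run A 0 t) (1 - a)")
    case True
    then show ?thesis unfolding departs_def by (blast intro: unsolved_if_both_depart)
  next
    case False
    then interpret lone_departure A "paw_run A 0 t" t a "1 - a" p by unfold_locales
    show ?thesis by (rule some_paw_unsolved)
  qed
qed

theorem theorem3:
  fixes c :: real and A :: algo
  assumes "c > 1" and "logmem c A"
  shows "\<exists>I F. valid_inst c I \<and> k I = 2 * dg I (bh I) \<and> adversary I F \<and> \<not> solved A I F"
proof -
  obtain p where p: "p < 3" and unsolved: "\<not> solved A (paw p) (\<lambda>t. trap A (paw p) (paw_run A p t))"
    using paw_unsolvable by blast
  have "k (paw p) = 2 * dg (paw p) (bh (paw p))" by (simp add: paw_deg_def)
  with valid_inst_paw[OF p \<open>c > 1\<close>] adversary_trap[OF p] unsolved show ?thesis by blast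
qed

end
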